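(* Let $p$ be an odd prime, $v\in\mathbb{N}$ and $z\in\mathbb{Z}\setminus\{0,-1\}$. Let $c_v,\tilde c_v$ be defined by $c_0=\tilde c_0=1$ and, for $v\ge1$, $c_v=\frac{1}{z}\sum_{j=1}^{v}e_j^{(2v-1)}c_{v-j}$ and $\tilde c_v=-\frac{1}{z+1}\sum_{j=1}^{v}e_j^{(2v-1)}\tilde c_{v-j}$. If $\gcd(p,z)=1$ then $$\sum_{k=0}^{p-1}(2k+1)^{2v}D_k(z)\equiv c_v\left(\frac{-z}{p}\right)\pmod p,$$ and if $\gcd(p,z+1)=1$ then $$\sum_{k=0}^{p-1}(-1)^k(2k+1)^{2v}D_k(z)\equiv \tilde c_v\left(\frac{z+1}{p}\right)\pmod p.$$
   Context: $D_n(z)=\sum_{k=0}^{n}\binom{n}{k}\binom{n+k}{k}z^k$ (Delannoy polynomials). For $s\in\mathbb{N}$ and $1\le j\le\lfloor (s+1)/2\rfloor$, $e_j^{(s)}=\binom{s}{2j}2^{2j-1}+\binom{s}{2j-1}2^{2j-2}$. $\left(\frac{\cdot}{p}\right)$ is the Legendre symbol. A congruence $a/b\equiv c\pmod p$ with $p\nmid b$ means $a\equiv bc\pmod p$; the denominators of $c_v$ (resp. $\tilde c_v$) at the integer $z$ divide a power of $z$ (resp. $z+1$). *)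

theory Defs
  imports "HOL-Number_Theory.Number_Theory"
begin

definition delannoy :: "nat \<Rightarrow> int \<Rightarrow> int" where
  "delannoy n z = (\<Sum>k = 0..n. int (n choose k) * int ((n + k) choose k) * z ^ k)"

definition e_coeff :: "nat \<Rightarrow> nat \<Rightarrow> int" where
  "e_coeff s j = int (s choose (2*j)) * 2 ^ (2*j - 1) + int (s choose (2*j - 1)) * 2 ^ (2*j - 2)"

fun c_seq :: "int \<Rightarrow> nat \<Rightarrow> rat" where
  "c_seq z v = (if v = 0 then 1 else
     (1 / of_int z) * (\<Sum>j = 1..v. of_int (e_coeff (2*v - 1) j) * c_seq z (v - j)))"

fun ct_seq :: "int \<Rightarrow> nat \<Rightarrow> rat" where
  "ct_seq z v = (if v = 0 then 1 else
     - (1 / of_int (z + 1)) * (\<Sum>j = 1..v. of_int (e_coeff (2*v - 1) j) * ct_seq z (v - j)))"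

declare c_seq.simps[simp del] ct_seq.simps[simp del]

definition rat_cong :: "rat \<Rightarrow> rat \<Rightarrow> int \<Rightarrow> bool" where
  "rat_cong q r m \<longleftrightarrow> (\<exists>a b. \<not> m dvd b \<and> m dvd a \<and> q - r = of_int a / of_int b)"

end

theory Submission
  imports Defs
begin

(* The Delannoy polynomials satisfy (n + 1) D_(n+1) = (2z + 1)(2n + 1) D_n - n D_(n-1).  Summing
   this recurrence against the weights (2k + 1)^(2v-1) telescopes, and the binomial expansion of
   (u + 1)(u + 2)^(2v-1) + (u - 1)(u - 2)^(2v-1) turns the telescoped identity into
   z S_v = sum_j e_j^(2v-1) S_(v-j) (mod p) for the moments S_v = sum_(k<p) (2k + 1)^(2v) D_k(z).
   Hence z^v S_v = (z^v c_v) S_0 (mod p).  Exchanging the sums in S_0 gives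
   sum_j binom(2j, j) binom(p + j, 2j + 1) z^j, in which only j = (p - 1)/2 survives modulo p; its
   value (-z)^((p-1)/2) is the Legendre symbol by Euler's criterion.  The alternating sums follow
   from the reflection D_n(-1 - z) = (-1)^n D_n(z). *)

definition delannoy_coeff :: "nat \<Rightarrow> nat \<Rightarrow> int" where
  "delannoy_coeff n j = int (n choose j) * int ((n + j) choose j)"

lemma delannoy_coeff_pochhammer:
  "real_of_int (delannoy_coeff n j) = pochhammer (real n - real j + 1) (2 * j) / (fact j)\<^sup>2"
proof -
  have "real (n choose j) = pochhammer (real n - real j + 1) j / fact j"
       "real ((n + j) choose j) = pochhammer (real n + 1) j / fact j"
    by (simp_all add: binomial_gbinomial gbinomial_pochhammer')
  moreover have "pochhammer (real n - real j + 1) (j + j)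
      = pochhammer (real n - real j + 1) j * pochhammer (real n + 1) j"
    by (simp add: pochhammer_product')
  ultimately show ?thesis
    by (simp add: delannoy_coeff_def mult_2 power2_eq_square)
qed

lemma delannoy_coeff_recurrence:
  "int (n + 2) * delannoy_coeff (n + 2) (i + 1)
     = int (2 * n + 3) * (delannoy_coeff (n + 1) (i + 1) + 2 * delannoy_coeff (n + 1) i)
       - int (n + 1) * delannoy_coeff n (i + 1)"
proof -
  define x where "x = real n - real i"
  \<comment> \<open>All four coefficients are multiples of Q by polynomials in x and i.\<close>
  define Q where "Q = pochhammer (x + 2) (2 * i) / (fact (i + 1))\<^sup>2"
  have fact_Suc: "(fact (i + 1) :: real)\<^sup>2 = (i + 1)\<^sup>2 * (fact i)\<^sup>2"
    by (simp add: power_mult_distrib)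
  have P0: "real_of_int (delannoy_coeff n (i + 1)) = pochhammer x (2 + 2 * i) / (fact (i + 1))\<^sup>2"
    and P1: "real_of_int (delannoy_coeff (n + 1) (i + 1)) = pochhammer (x + 1) (Suc (Suc (2 * i))) / (fact (i + 1))\<^sup>2"
    and P2: "real_of_int (delannoy_coeff (n + 2) (i + 1)) = pochhammer (x + 2) (2 * i + 2) / (fact (i + 1))\<^sup>2"
    and P1_lower: "real_of_int (delannoy_coeff (n + 1) i) = (i + 1)\<^sup>2 * Q"
    unfolding delannoy_coeff_pochhammer Q_def x_def fact_Suc by (simp_all add: algebra_simps)
  have "pochhammer x (2 + 2 * i) = x * (x + 1) * pochhammer (x + 2) (2 * i)"
    using pochhammer_product'[of x 2 "2 * i"] by (simp add: numeral_2_eq_2 pochhammer_rec)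
  moreover have "pochhammer (x + 1) (Suc (Suc (2 * i))) = (x + 1) * pochhammer (x + 2) (Suc (2 * i))"
    by (simp add: pochhammer_rec algebra_simps)
  moreover have "pochhammer (x + 2) (Suc (2 * i)) = (x + 2 + 2 * i) * pochhammer (x + 2) (2 * i)"
    by (simp add: pochhammer_rec')
  moreover have "pochhammer (x + 2) (2 * i + 2) = (x + 2 + 2 * i) * (x + 3 + 2 * i) * pochhammer (x + 2) (2 * i)"
    using pochhammer_product'[of "x + 2" "2 * i" 2]
    by (simp add: numeral_2_eq_2 pochhammer_rec algebra_simps)
  ultimately have D0: "real_of_int (delannoy_coeff n (i + 1)) = x * (x + 1) * Q"
    and D1: "real_of_int (delannoy_coeff (n + 1) (i + 1)) = (x + 1) * (x + 2 + 2 * i) * Q"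
    and D2: "real_of_int (delannoy_coeff (n + 2) (i + 1)) = (x + 2 + 2 * i) * (x + 3 + 2 * i) * Q"
    unfolding P0 P1 P2 Q_def by simp_all
  have "real n = x + i" unfolding x_def by simp
  then have "real (n + 2) * real_of_int (delannoy_coeff (n + 2) (i + 1))
      = real (2 * n + 3) * (real_of_int (delannoy_coeff (n + 1) (i + 1)) + 2 * real_of_int (delannoy_coeff (n + 1) i))
          - real (n + 1) * real_of_int (delannoy_coeff n (i + 1))"
    unfolding D0 D1 D2 P1_lower by (simp add: power2_eq_square algebra_simps)
  then have "real_of_int (int (n + 2) * delannoy_coeff (n + 2) (i + 1))
      = real_of_int (int (2 * n + 3) * (delannoy_coeff (n + 1) (i + 1) + 2 * delannoy_coeff (n + 1) i)
          - int (n + 1) * delannoy_coeff n (i + 1))"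
    by simp
  then show ?thesis by (simp only: of_int_eq_iff)
qed

lemma delannoy_eq_sum_coeff:
  assumes "m \<le> N"
  shows "delannoy m z = (\<Sum>j\<le>N. delannoy_coeff m j * z ^ j)"
proof -
  have "delannoy m z = (\<Sum>j\<le>m. delannoy_coeff m j * z ^ j)"
    by (simp add: delannoy_def delannoy_coeff_def atLeast0AtMost)
  also have "\<dots> = (\<Sum>j\<le>N. delannoy_coeff m j * z ^ j)"
    by (rule sum.mono_neutral_left) (use assms in \<open>auto simp: delannoy_coeff_def\<close>)
  finally show ?thesis .
qed

lemma delannoy_recurrence:
  "int (n + 2) * delannoy (n + 2) z
     = (2 * z + 1) * int (2 * n + 3) * delannoy (n + 1) z - int (n + 1) * delannoy n z"
proof -
  define N where "N = n + 1"
  have tail: "delannoy m z = 1 + (\<Sum>i\<le>N. delannoy_coeff m (i + 1) * z ^ (i + 1))"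
    if "m \<le> n + 2" for m
  proof -
    have "delannoy m z = (\<Sum>j\<le>Suc N. delannoy_coeff m j * z ^ j)"
      using delannoy_eq_sum_coeff that N_def by simp
    also have "\<dots> = delannoy_coeff m 0 * z ^ 0 + (\<Sum>i\<le>N. delannoy_coeff m (Suc i) * z ^ Suc i)"
      by (rule sum.atMost_Suc_shift)
    finally show ?thesis by (simp add: delannoy_coeff_def)
  qed
  have shifted: "z * delannoy (n + 1) z = (\<Sum>i\<le>N. delannoy_coeff (n + 1) i * z ^ (i + 1))"
    unfolding N_def
    by (subst delannoy_eq_sum_coeff[of _ "n + 1"]) (auto simp: sum_distrib_left algebra_simps)
  have "(2 * z + 1) * int (2 * n + 3) * delannoy (n + 1) z - int (n + 1) * delannoy n z
        - int (n + 2) * delannoy (n + 2) z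
      = 2 * int (2 * n + 3) * (z * delannoy (n + 1) z) + int (2 * n + 3) * delannoy (n + 1) z
        - int (n + 1) * delannoy n z - int (n + 2) * delannoy (n + 2) z"
    by (simp add: algebra_simps)
  also have "\<dots> = (\<Sum>i\<le>N. (int (2 * n + 3) * (delannoy_coeff (n + 1) (i + 1) + 2 * delannoy_coeff (n + 1) i)
           - int (n + 1) * delannoy_coeff n (i + 1) - int (n + 2) * delannoy_coeff (n + 2) (i + 1))
           * z ^ (i + 1))"
    using tail[of n] tail[of "n + 1"] tail[of "n + 2"] unfolding shifted
    by (simp add: algebra_simps sum_distrib_left sum.distrib sum_subtractf)
  also have "\<dots> = 0"
    by (intro sum.neutral ballI) (simp only: delannoy_coeff_recurrence diff_self mult_zero_left)
  finally show ?thesis by simp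
qed

lemma delannoy_reflect: "delannoy n (- 1 - z) = (- 1) ^ n * delannoy n z"
proof (induction n rule: induct_nat_012)
  case (ge2 n)
  have "int (n + 2) * delannoy (n + 2) (- 1 - z)
      = (2 * (- 1 - z) + 1) * int (2 * n + 3) * delannoy (n + 1) (- 1 - z) - int (n + 1) * delannoy n (- 1 - z)"
    by (rule delannoy_recurrence)
  also have "\<dots> = (- 1) ^ (n + 2) * ((2 * z + 1) * int (2 * n + 3) * delannoy (n + 1) z - int (n + 1) * delannoy n z)"
    using ge2.IH by (simp add: algebra_simps)
  also have "\<dots> = int (n + 2) * ((- 1) ^ (n + 2) * delannoy (n + 2) z)"
    by (simp only: delannoy_recurrence[symmetric]) (simp add: algebra_simps)
  finally show ?case by simp
qed (simp_all add: delannoy_def)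

lemma delannoy_coeff_central_binomial:
  "delannoy_coeff k j = int ((2 * j) choose j) * int ((k + j) choose (2 * j))"
proof -
  have "real ((k + j) choose (2 * j)) = pochhammer (real k - real j + 1) (2 * j) / fact (2 * j)"
    by (simp add: binomial_gbinomial gbinomial_pochhammer' algebra_simps)
  moreover have "real ((2 * j) choose j) = fact (2 * j) / (fact j)\<^sup>2"
    by (simp add: binomial_fact mult_2 power2_eq_square)
  ultimately have "real_of_int (delannoy_coeff k j)
      = real_of_int (int ((2 * j) choose j) * int ((k + j) choose (2 * j)))"
    unfolding delannoy_coeff_pochhammer by simp
  then show ?thesis by (simp only: of_int_eq_iff)
qed

lemma sum_choose_shifted: "(\<Sum>k<n. (k + j) choose (2 * j)) = (n + j) choose (2 * j + 1)"
  by (induction n) (simp_all add: binomial_eq_0)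

lemma prime_dvd_choose:
  assumes "prime p" "k \<le> n" "p \<le> n" "k < p" "n - k < p"
  shows "p dvd (n choose k)"
proof -
  have "p dvd fact k * fact (n - k) * (n choose k)"
    using assms by (simp add: binomial_fact_lemma prime_dvd_fact_iff)
  moreover have "\<not> p dvd fact k * fact (n - k)"
    using assms by (simp add: prime_dvd_fact_iff prime_dvd_mult_iff)
  ultimately show ?thesis
    using assms(1) by (simp add: prime_dvd_mult_iff)
qed

lemma choose_diff_one_prime_cong:
  assumes "prime p" "k < p"
  shows "[int ((p - 1) choose k) = (- 1) ^ k] (mod int p)"
  using assms(2)
proof (induction k)
  case (Suc k)
  have "p choose Suc k = ((p - 1) choose k) + ((p - 1) choose Suc k)"
    using assms(1) prime_gt_0_nat by (metis Suc_pred' binomial_Suc_Suc)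
  moreover have "p dvd (p choose Suc k)"
    using Suc.prems assms(1) by (intro prime_dvd_choose) auto
  ultimately have "[int ((p - 1) choose Suc k) = - int ((p - 1) choose k)] (mod int p)"
    by (simp add: cong_iff_dvd_diff add.commute flip: of_nat_add int_dvd_int_iff)
  also have "[- int ((p - 1) choose k) = - ((- 1) ^ k)] (mod int p)"
    using Suc by (simp add: cong_minus_minus_iff)
  finally show ?case by simp
qed simp

lemma choose_prime_add_cong:
  assumes "prime p" "h < p"
  shows "[int ((p + h) choose h) = 1] (mod int p)"
proof -
  have "(p + h) choose h = (\<Sum>i\<le>h. (p choose i) * (h choose (h - i)))"
    by (rule vandermonde[symmetric])
  also have "\<dots> = 1 + (\<Sum>i\<in>{1..h}. (p choose i) * (h choose (h - i)))"
    by (simp add: atMost_atLeast0 sum.atLeast_Suc_atMost)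
  finally have "int ((p + h) choose h) - 1 = int (\<Sum>i\<in>{1..h}. (p choose i) * (h choose (h - i)))"
    by simp
  moreover have "p dvd (\<Sum>i\<in>{1..h}. (p choose i) * (h choose (h - i)))"
    using assms by (intro dvd_sum dvd_mult2 prime_dvd_choose) auto
  ultimately have "int p dvd int ((p + h) choose h) - 1"
    by (simp only: int_dvd_int_iff)
  then show ?thesis
    by (simp add: cong_iff_dvd_diff)
qed

definition delannoy_moment :: "int \<Rightarrow> nat \<Rightarrow> nat \<Rightarrow> int" where
  "delannoy_moment z v n = (\<Sum>k<n. (2 * int k + 1) ^ (2 * v) * delannoy k z)"

lemma delannoy_moment_zero_cong:
  assumes "prime p" "odd p"
  shows "[delannoy_moment z 0 p = (- z) ^ ((p - 1) div 2)] (mod int p)"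
proof -
  define h where "h = (p - 1) div 2"
  have p: "p = 2 * h + 1" using assms(2) unfolding h_def by simp
  define T where "T j = z ^ j * int ((2 * j) choose j) * int ((p + j) choose (2 * j + 1))" for j
  have "delannoy_moment z 0 p = (\<Sum>k<p. \<Sum>j\<le>p - 1. delannoy_coeff k j * z ^ j)"
    unfolding delannoy_moment_def by (intro sum.cong refl) (auto intro!: delannoy_eq_sum_coeff)
  also have "\<dots> = (\<Sum>j\<le>p - 1. \<Sum>k<p. delannoy_coeff k j * z ^ j)"
    by (rule sum.swap)
  also have "\<dots> = (\<Sum>j\<le>p - 1. T j)"
  proof (rule sum.cong[OF refl])
    fix j
    have "(\<Sum>k<p. delannoy_coeff k j * z ^ j)
        = z ^ j * int ((2 * j) choose j) * int (\<Sum>k<p. (k + j) choose (2 * j))"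
      by (simp add: delannoy_coeff_central_binomial sum_distrib_left algebra_simps)
    then show "(\<Sum>k<p. delannoy_coeff k j * z ^ j) = T j"
      unfolding T_def sum_choose_shifted .
  qed
  also have "\<dots> = T h + (\<Sum>j\<in>{..p - 1} - {h}. T j)"
    by (rule sum.remove) (auto simp: p)
  finally have split: "delannoy_moment z 0 p = T h + (\<Sum>j\<in>{..p - 1} - {h}. T j)" .
  have "int p dvd T j" if "j \<in> {..p - 1} - {h}" for j
  proof (cases "j < h")
    case True
    then have "p dvd ((p + j) choose (2 * j + 1))"
      using assms(1) by (intro prime_dvd_choose) (auto simp: p)
    then show ?thesis unfolding T_def by (simp flip: int_dvd_int_iff)
  next
    case False
    then have "p dvd ((2 * j) choose j)"
      using that assms(1) by (intro prime_dvd_choose) (auto simp: p)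
    then show ?thesis unfolding T_def by (metis dvd_mult2 dvd_mult int_dvd_int_iff mult.assoc)
  qed
  then have rest: "[(\<Sum>j\<in>{..p - 1} - {h}. T j) = 0] (mod int p)"
    unfolding cong_0_iff by (rule dvd_sum)
  have central: "(2 * h) choose h = (p - 1) choose h"
    using p by simp
  have upper: "(p + h) choose (2 * h + 1) = (p + h) choose h"
    using binomial_symmetric[of p "p + h"] p by simp
  have "[T h = z ^ h * (- 1) ^ h * 1] (mod int p)"
    unfolding T_def central upper using assms(1) p
    by (intro cong_mult cong_refl choose_diff_one_prime_cong choose_prime_add_cong) simp_all
  with rest have "[delannoy_moment z 0 p = z ^ h * (- 1) ^ h * 1 + 0] (mod int p)"
    unfolding split by (intro cong_add)
  then show ?thesis
    unfolding h_def[symmetric] by (simp add: power_mult_distrib[symmetric] mult.commute)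
qed

lemma sum_atMost_even_pairs:
  fixes f :: "nat \<Rightarrow> 'a :: comm_monoid_add"
  shows "(\<Sum>i\<le>2 * n. f i) = f 0 + (\<Sum>j = 1..n. f (2 * j - 1) + f (2 * j))"
proof (induction n)
  case (Suc n)
  have "(\<Sum>i\<le>2 * Suc n. f i) = (\<Sum>i\<le>2 * n. f i) + f (2 * n + 1) + f (2 * n + 2)"
    by (simp add: add.assoc)
  then show ?case using Suc by (simp add: add.assoc)
qed simp

lemma shifted_odd_power_identity:
  fixes u :: int
  assumes "v \<ge> 1"
  shows "(u + 1) * (u + 2) ^ (2 * v - 1) + (u - 1) * (u - 2) ^ (2 * v - 1)
       = 2 * u ^ (2 * v) + 4 * (\<Sum>j = 1..v. e_coeff (2 * v - 1) j * u ^ (2 * (v - j)))"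
proof -
  define s where "s = 2 * v - 1"
  define h where "h i = int (s choose i) * u ^ (s - i) * ((u + 1) * 2 ^ i + (u - 1) * (- 2) ^ i)" for i
  have "(u + 2) ^ s = (\<Sum>i\<le>s. int (s choose i) * 2 ^ i * u ^ (s - i))"
    and "(u - 2) ^ s = (\<Sum>i\<le>s. int (s choose i) * (- 2) ^ i * u ^ (s - i))"
    using binomial_ring[of 2 u s] binomial_ring[of "- 2" u s] by (simp_all add: add.commute)
  then have "(u + 1) * (u + 2) ^ s + (u - 1) * (u - 2) ^ s = (\<Sum>i\<le>s. h i)"
    unfolding h_def by (simp add: sum_distrib_left sum.distrib[symmetric] algebra_simps)
  also have "\<dots> = (\<Sum>i\<le>2 * v. h i)"
    using assms by (intro sum.mono_neutral_left) (auto simp: h_def s_def)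
  also have "\<dots> = h 0 + (\<Sum>j = 1..v. h (2 * j - 1) + h (2 * j))"
    by (rule sum_atMost_even_pairs)
  also have "\<dots> = 2 * u ^ (2 * v) + (\<Sum>j = 1..v. 4 * (e_coeff s j * u ^ (2 * (v - j))))"
  proof -
    have "h 0 = 2 * u ^ (2 * v)"
      using assms by (simp add: h_def s_def algebra_simps flip: power_Suc)
    moreover have "h (2 * j - 1) + h (2 * j) = 4 * (e_coeff s j * u ^ (2 * (v - j)))"
      if "j \<in> {1..v}" for j
    proof -
      define t where "t = j - 1"
      have j: "j = Suc t" using that by (simp add: t_def)
      have signs: "(- 2 :: int) ^ (2 * j - 1) = - (2 ^ (2 * j - 1))" "(- 2 :: int) ^ (2 * j) = 2 ^ (2 * j)"
        by (simp_all add: j power_minus_odd)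
      have powers: "(2 :: int) ^ (2 * j - 1) = 2 * 2 ^ (2 * j - 2)" "(2 :: int) ^ (2 * j) = 4 * 2 ^ (2 * j - 2)"
        by (simp_all add: j)
      have "s - (2 * j - 1) = 2 * (v - j)"
        using that unfolding s_def by simp
      then have odd_term: "h (2 * j - 1) = 4 * int (s choose (2 * j - 1)) * 2 ^ (2 * j - 2) * u ^ (2 * (v - j))"
        unfolding h_def signs powers by (simp add: algebra_simps)
      have "int (s choose (2 * j)) * u ^ (s - 2 * j) * u = int (s choose (2 * j)) * u ^ (2 * (v - j))"
      proof (cases "j < v")
        case True
        then have "s - 2 * j + 1 = 2 * (v - j)" unfolding s_def by simp
        then show ?thesis by (metis mult.assoc power_Suc2 Suc_eq_plus1)
      qed (use that in \<open>simp add: s_def binomial_eq_0\<close>)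
      then have even_term: "h (2 * j) = 8 * int (s choose (2 * j)) * 2 ^ (2 * j - 2) * u ^ (2 * (v - j))"
        unfolding h_def signs powers by (simp add: algebra_simps)
      show ?thesis
        unfolding odd_term even_term e_coeff_def powers(1) by (simp add: algebra_simps)
    qed
    ultimately show ?thesis by simp
  qed
  finally show ?thesis
    by (simp add: s_def sum_distrib_left)
qed

lemma delannoy_telescoping_sum:
  fixes w :: "int \<Rightarrow> int"
  shows "(\<Sum>k<n. delannoy k z * (int k * w (int k - 1) + (int k + 1) * w (int k + 1)
                                  - (2 * z + 1) * (2 * int k + 1) * w (int k)))
       = int n * (w (int n) * delannoy (n - 1) z - w (int n - 1) * delannoy n z)"
proof (induction n)
  case (Suc n)
  have "int (n + 1) * delannoy (n + 1) z = (2 * z + 1) * int (2 * n + 1) * delannoy n z - int n * delannoy (n - 1) z"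
    using delannoy_recurrence[of "n - 1" z] by (cases n) (simp_all add: delannoy_def algebra_simps)
  moreover have "int n * (w (int n) * delannoy (n - 1) z - w (int n - 1) * delannoy n z)
      + delannoy n z * (int n * w (int n - 1) + (int n + 1) * w (int n + 1) - (2 * z + 1) * (2 * int n + 1) * w (int n))
      - int (Suc n) * (w (int (Suc n)) * delannoy (Suc n - 1) z - w (int (Suc n) - 1) * delannoy (Suc n) z)
    = w (int n) * (int (n + 1) * delannoy (n + 1) z
                   - ((2 * z + 1) * int (2 * n + 1) * delannoy n z - int n * delannoy (n - 1) z))"
    by (simp add: algebra_simps)
  ultimately show ?case
    using Suc.IH by simp
qed simp

lemma delannoy_moment_recurrence:
  assumes "v \<ge> 1"
  shows "2 * ((\<Sum>j = 1..v. e_coeff (2 * v - 1) j * delannoy_moment z (v - j) n) - z * delannoy_moment z v n)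
       = int n * ((2 * int n + 1) ^ (2 * v - 1) * delannoy (n - 1) z
                  - (2 * int n - 1) ^ (2 * v - 1) * delannoy n z)"
proof -
  define w where "w t = (2 * t + 1) ^ (2 * v - 1)" for t :: int
  have weight: "int k * w (int k - 1) + (int k + 1) * w (int k + 1) - (2 * z + 1) * (2 * int k + 1) * w (int k)
      = 2 * (\<Sum>j = 1..v. e_coeff (2 * v - 1) j * (2 * int k + 1) ^ (2 * (v - j))) - 2 * z * (2 * int k + 1) ^ (2 * v)"
    for k
  proof -
    define u where "u = 2 * int k + 1"
    define A B C E where "A = (u - 2) ^ (2 * v - 1)" and "B = (u + 2) ^ (2 * v - 1)"
      and "C = u ^ (2 * v - 1)" and "E = (\<Sum>j = 1..v. e_coeff (2 * v - 1) j * u ^ (2 * (v - j)))"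
    have "u ^ (2 * v) = u * C"
      using assms unfolding C_def by (simp flip: power_Suc)
    then have "(u + 1) * B + (u - 1) * A = 2 * (u * C) + 4 * E"
      using shifted_odd_power_identity[OF assms, of u] unfolding A_def B_def E_def by simp
    then have "int k * A + (int k + 1) * B - (2 * z + 1) * u * C = 2 * E - 2 * z * (u * C)"
      unfolding u_def by (simp add: algebra_simps)
    moreover have "w (int k - 1) = A" "w (int k + 1) = B" "w (int k) = C"
      unfolding w_def A_def B_def C_def u_def by (simp_all add: algebra_simps)
    ultimately show ?thesis
      using \<open>u ^ (2 * v) = u * C\<close> unfolding E_def u_def by simp
  qed
  have "int n * ((2 * int n + 1) ^ (2 * v - 1) * delannoy (n - 1) z - (2 * int n - 1) ^ (2 * v - 1) * delannoy n z)
      = (\<Sum>k<n. delannoy k z * (int k * w (int k - 1) + (int k + 1) * w (int k + 1)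
                                  - (2 * z + 1) * (2 * int k + 1) * w (int k)))"
    unfolding delannoy_telescoping_sum by (simp add: w_def algebra_simps)
  also have "\<dots> = (\<Sum>k<n. 2 * (\<Sum>j = 1..v. e_coeff (2 * v - 1) j * ((2 * int k + 1) ^ (2 * (v - j)) * delannoy k z))
                         - 2 * z * ((2 * int k + 1) ^ (2 * v) * delannoy k z))"
    unfolding weight by (simp add: sum_distrib_left sum_distrib_right algebra_simps)
  also have "\<dots> = 2 * ((\<Sum>j = 1..v. e_coeff (2 * v - 1) j * delannoy_moment z (v - j) n) - z * delannoy_moment z v n)"
    unfolding delannoy_moment_def
    by (simp add: sum_subtractf sum_distrib_left right_diff_distrib mult.assoc sum.swap[of _ "{..<n}"])
  finally show ?thesis by simp
qed

lemma delannoy_moment_step_cong: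
  assumes "odd p" "v \<ge> 1"
  shows "[z * delannoy_moment z v p = (\<Sum>j = 1..v. e_coeff (2 * v - 1) j * delannoy_moment z (v - j) p)] (mod int p)"
proof -
  have "int p dvd 2 * ((\<Sum>j = 1..v. e_coeff (2 * v - 1) j * delannoy_moment z (v - j) p) - z * delannoy_moment z v p)"
    unfolding delannoy_moment_recurrence[OF assms(2)] by simp
  moreover have "coprime (int p) 2"
    using assms(1) by simp
  ultimately have "int p dvd (\<Sum>j = 1..v. e_coeff (2 * v - 1) j * delannoy_moment z (v - j) p) - z * delannoy_moment z v p"
    using coprime_dvd_mult_right_iff by (metis mult.commute)
  then show ?thesis
    by (subst cong_sym_eq) (simp add: cong_iff_dvd_diff)
qed

fun c_seq_numer :: "int \<Rightarrow> nat \<Rightarrow> int" where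
  "c_seq_numer z v = (if v = 0 then 1 else
     (\<Sum>j = 1..v. e_coeff (2 * v - 1) j * z ^ (j - 1) * c_seq_numer z (v - j)))"

declare c_seq_numer.simps [simp del]

lemma c_seq_numer_eq:
  assumes "z \<noteq> 0"
  shows "of_int (c_seq_numer z v) = of_int z ^ v * c_seq z v"
proof (induction v rule: less_induct)
  case (less v)
  show ?case
  proof (cases "v = 0")
    case False
    have "of_int z ^ v * c_seq z v
        = (\<Sum>j = 1..v. of_int (e_coeff (2 * v - 1) j) * of_int z ^ (j - 1) * (of_int z ^ (v - j) * c_seq z (v - j)))"
    proof -
      have "of_int z ^ v = (of_int z :: rat) * of_int z ^ (j - 1) * of_int z ^ (v - j)" if "j \<in> {1..v}" for j
        using that by (simp flip: power_add power_Suc)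
      then show ?thesis
        using False assms by (subst c_seq.simps) (simp add: sum_distrib_left algebra_simps)
    qed
    also have "\<dots> = (\<Sum>j = 1..v. of_int (e_coeff (2 * v - 1) j) * of_int z ^ (j - 1) * of_int (c_seq_numer z (v - j)))"
      using False less by (intro sum.cong refl) auto
    also have "\<dots> = of_int (c_seq_numer z v)"
      using False by (subst (2) c_seq_numer.simps) simp
    finally show ?thesis by simp
  qed (simp add: c_seq_numer.simps c_seq.simps)
qed

lemma delannoy_moment_cong:
  assumes "odd p"
  shows "[z ^ v * delannoy_moment z v p = c_seq_numer z v * delannoy_moment z 0 p] (mod int p)"
proof (induction v rule: less_induct)
  case (less v)
  show ?case
  proof (cases "v = 0")
    case False
    have "z ^ v * delannoy_moment z v p = z ^ (v - 1) * (z * delannoy_moment z v p)"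
      using False by (cases v) simp_all
    also have "[\<dots> = z ^ (v - 1) * (\<Sum>j = 1..v. e_coeff (2 * v - 1) j * delannoy_moment z (v - j) p)] (mod int p)"
      using False by (intro cong_mult cong_refl delannoy_moment_step_cong assms) simp
    also have "z ^ (v - 1) * (\<Sum>j = 1..v. e_coeff (2 * v - 1) j * delannoy_moment z (v - j) p)
        = (\<Sum>j = 1..v. e_coeff (2 * v - 1) j * z ^ (j - 1) * (z ^ (v - j) * delannoy_moment z (v - j) p))"
    proof -
      have "z ^ (v - 1) = z ^ (j - 1) * z ^ (v - j)" if "j \<in> {1..v}" for j
        using that by (simp flip: power_add)
      then show ?thesis
        unfolding sum_distrib_left by (intro sum.cong refl) simp
    qed
    also have "[\<dots> = (\<Sum>j = 1..v. e_coeff (2 * v - 1) j * z ^ (j - 1) * (c_seq_numer z (v - j) * delannoy_moment z 0 p))] (mod int p)"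
      using False by (intro cong_sum cong_mult cong_refl less.IH) auto
    also have "(\<Sum>j = 1..v. e_coeff (2 * v - 1) j * z ^ (j - 1) * (c_seq_numer z (v - j) * delannoy_moment z 0 p))
        = c_seq_numer z v * delannoy_moment z 0 p"
      using False by (subst (2) c_seq_numer.simps) (simp add: sum_distrib_left algebra_simps)
    finally show ?thesis .
  qed (simp add: c_seq_numer.simps)
qed

lemma rat_cong_of_int_cong:
  assumes "[d * a = b] (mod m)" "\<not> m dvd d"
  shows "rat_cong (of_int a) (of_int b / of_int d) m"
proof -
  have "d \<noteq> 0" using assms(2) by auto
  then have "of_int a - of_int b / of_int d = (of_int (d * a - b) / of_int d :: rat)"
    by (simp add: field_simps)
  moreover have "m dvd d * a - b"
    using assms(1) by (simp add: cong_iff_dvd_diff)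
  ultimately show ?thesis
    unfolding rat_cong_def using assms(2) by blast
qed

lemma delannoy_moment_rat_cong:
  assumes "prime p" "odd p" "z \<noteq> 0" "coprime (int p) z"
  shows "rat_cong (of_int (delannoy_moment z v p)) (c_seq z v * of_int (Legendre (- z) (int p))) (int p)"
proof -
  have "p > 2" using assms(1,2) prime_ge_2_nat[OF assms(1)] by (cases "p = 2") auto
  then have "[delannoy_moment z 0 p = Legendre (- z) (int p)] (mod int p)"
    using delannoy_moment_zero_cong[OF assms(1,2)] euler_criterion[OF assms(1)]
    by (metis cong_sym cong_trans)
  then have "[z ^ v * delannoy_moment z v p = c_seq_numer z v * Legendre (- z) (int p)] (mod int p)"
    using delannoy_moment_cong[OF assms(2)] cong_mult[OF cong_refl] cong_trans by metis
  moreover have "\<not> int p dvd z ^ v"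
  proof
    assume "int p dvd z ^ v"
    moreover have "prime (int p)" using assms(1) by simp
    ultimately show False
      using assms(4) by (metis prime_dvd_power coprime_common_divisor not_prime_unit dvd_refl)
  qed
  ultimately have "rat_cong (of_int (delannoy_moment z v p)) (of_int (c_seq_numer z v * Legendre (- z) (int p)) / of_int (z ^ v)) (int p)"
    by (rule rat_cong_of_int_cong)
  then show ?thesis
    using assms(3) by (simp add: c_seq_numer_eq)
qed

lemma ct_seq_eq_c_seq_reflect: "ct_seq z v = c_seq (- 1 - z) v"
proof (induction v rule: less_induct)
  case (less v)
  show ?case
  proof (cases "v = 0")
    case False
    have "(\<Sum>j = 1..v. of_int (e_coeff (2 * v - 1) j) * ct_seq z (v - j))
        = (\<Sum>j = 1..v. of_int (e_coeff (2 * v - 1) j) * c_seq (- 1 - z) (v - j))"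
      using less False by (intro sum.cong refl) auto
    moreover have "- (rat_of_int z + 1) = - 1 - rat_of_int z"
      by simp
    ultimately show ?thesis
      using False by (subst ct_seq.simps, subst c_seq.simps) (simp add: minus_divide_right)
  qed (simp add: c_seq.simps ct_seq.simps)
qed

theorem theorem1p2:
  fixes p :: nat and v :: nat and z :: int
  assumes "prime p" and "odd p" and "z \<noteq> 0" and "z \<noteq> -1"
  shows "(coprime (int p) z \<longrightarrow>
            rat_cong (of_int (\<Sum>k = 0..p - 1. (2 * int k + 1) ^ (2 * v) * delannoy k z))
                     (c_seq z v * of_int (Legendre (- z) (int p))) (int p))
       \<and> (coprime (int p) (z + 1) \<longrightarrow>
            rat_cong (of_int (\<Sum>k = 0..p - 1. (-1) ^ k * (2 * int k + 1) ^ (2 * v) * delannoy k z))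
                     (ct_seq z v * of_int (Legendre (z + 1) (int p))) (int p))"
proof -
  have range: "{0..p - 1} = {..<p}"
    using prime_gt_0_nat[OF assms(1)] by auto
  have moment: "(\<Sum>k = 0..p - 1. (2 * int k + 1) ^ (2 * v) * delannoy k z) = delannoy_moment z v p"
    unfolding delannoy_moment_def range ..
  have reflected_moment:
    "(\<Sum>k = 0..p - 1. (-1) ^ k * (2 * int k + 1) ^ (2 * v) * delannoy k z) = delannoy_moment (- 1 - z) v p"
    unfolding delannoy_moment_def range by (simp add: delannoy_reflect algebra_simps)
  have "coprime (int p) (z + 1) \<Longrightarrow> coprime (int p) (- 1 - z)"
    by (metis coprime_minus_right_iff minus_diff_eq diff_minus_eq_add uminus_add_conv_diff add.commute)
  then show ?thesis
    using delannoy_moment_rat_cong[OF assms(1,2), of z v] delannoy_moment_rat_cong[OF assms(1,2), of "- 1 - z" v] assms(3,4)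
    unfolding moment reflected_moment ct_seq_eq_c_seq_reflect by auto
qed

end
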